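(* Let $E\subset\partial\mathbb{D}$ be closed and suppose $E$ contains no pair of antipodal points (no $\zeta$ with $\zeta,-\zeta\in E$). Then there is $\alpha\in[0,2\pi)$ such that $\{-ie^{i\alpha},\ e^{i\alpha},\ ie^{i\alpha}\}\subset\partial\mathbb{D}\setminus E$.
   Context: $\partial\mathbb{D}$ is the unit circle in $\mathbb{C}$. *)

theory Defs
  imports "HOL-Analysis.Analysis"
begin

end

theory Submission
  imports Defs
begin

text \<open>If the claim failed, every point w of the circle would have one of -iw, w, iw in E.
  Applying this to w = -iu and to -w shows that u or -u lies in E for every u on the circle.
  So the circle would be covered by the disjoint closed sets E and -E, both nonempty,
  contradicting its connectedness.\<close>

lemma unit_circle_eq_exp_Arg:
  assumes "z \<in> sphere (0::complex) 1"
  shows "\<exists>\<alpha>::real. 0 \<le> \<alpha> \<and> \<alpha> < 2 * pi \<and> z = exp (\<i> * of_real \<alpha>)"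
  using assms Arg2pi[of z] unfolding is_Arg_def by auto

lemma connected_not_covered_by_antipodal_free:
  fixes S E :: "'a::real_normed_vector set"
  assumes "connected S" "S \<noteq> {}" "uminus ` S \<subseteq> S"
    and "closed E" "\<And>\<zeta>. \<zeta> \<in> E \<Longrightarrow> - \<zeta> \<notin> E"
  shows "\<not> S \<subseteq> E \<union> uminus ` E"
proof
  assume cover: "S \<subseteq> E \<union> uminus ` E"
  obtain s where s: "s \<in> S" using assms(2) by blast
  with assms(3) have "- s \<in> S" by blast
  have "s \<in> E \<or> - s \<in> E" using s cover by auto
  with s \<open>- s \<in> S\<close> have "E \<inter> S \<noteq> {}" "uminus ` E \<inter> S \<noteq> {}"
    by (force simp: image_iff)+
  moreover have "E \<inter> uminus ` E \<inter> S = {}" using assms(5) by auto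
  moreover have "closed (uminus ` E)" using assms(4) by (simp add: closed_negations)
  ultimately show False
    using assms(1,4) cover unfolding connected_closed by blast
qed

lemma quarter_turns_cover_antipodes:
  fixes E :: "complex set"
  assumes hit: "\<And>w. w \<in> sphere 0 1 \<Longrightarrow> - \<i> * w \<in> E \<or> w \<in> E \<or> \<i> * w \<in> E"
    and antipodal_free: "\<And>\<zeta>. \<zeta> \<in> E \<Longrightarrow> - \<zeta> \<notin> E"
    and u: "u \<in> sphere 0 1"
  shows "u \<in> E \<or> - u \<in> E"
proof -
  define w where "w = - \<i> * u"
  have "w \<in> sphere 0 1" "- w \<in> sphere 0 1" using u by (auto simp: w_def norm_mult)
  moreover have "\<i> * w = u" "- \<i> * w = - u" "\<i> * - w = - u" "- \<i> * - w = u"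
    by (auto simp: w_def algebra_simps)
  ultimately show ?thesis using hit antipodal_free by (metis minus_minus)
qed

theorem lemma1:
  fixes E :: "complex set"
  assumes "closed E"
    and "E \<subseteq> sphere 0 1"
    and "\<not> (\<exists>\<zeta>. \<zeta> \<in> E \<and> - \<zeta> \<in> E)"
  shows "\<exists>\<alpha>::real. 0 \<le> \<alpha> \<and> \<alpha> < 2 * pi \<and>
           {- \<i> * exp (\<i> * of_real \<alpha>), exp (\<i> * of_real \<alpha>), \<i> * exp (\<i> * of_real \<alpha>)}
             \<subseteq> sphere 0 1 - E"
proof (rule ccontr)
  assume fails: "\<not> ?thesis"
  have antipodal_free: "\<And>\<zeta>. \<zeta> \<in> E \<Longrightarrow> - \<zeta> \<notin> E" using assms(3) by blast
  have hit: "- \<i> * w \<in> E \<or> w \<in> E \<or> \<i> * w \<in> E" if "w \<in> sphere 0 1" for w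
    using fails unit_circle_eq_exp_Arg[OF that] that by (auto simp: norm_mult)
  have "sphere (0::complex) 1 \<subseteq> E \<union> uminus ` E"
    using quarter_turns_cover_antipodes[OF hit antipodal_free] by (force simp: image_iff)
  moreover have "connected (sphere (0::complex) 1)" by (rule connected_sphere) auto
  moreover have "sphere (0::complex) 1 \<noteq> {}" "uminus ` sphere (0::complex) 1 \<subseteq> sphere 0 1"
    by (auto simp: ex_in_conv [symmetric])
  ultimately show False
    using connected_not_covered_by_antipodal_free[OF _ _ _ assms(1) antipodal_free] by auto
qed

end
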